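(* Let $W\subset\mathbb{P}^3$ be a general cubic surface. The assertion $H(4)$ holds: there is a type $\tau$ for degree $x_4=10$ trees such that $h^1(W,\mathcal{I}_{W\cap Y,W}(4))=0$ for a general $Y\in T(3,10,\tau)$ meeting $W$ transversally.
   Context: A degree $d$ tree in $\mathbb{P}^3$ is a connected nodal curve of degree $d$ and arithmetic genus $0$ whose components are lines. An ordering $L_1,\dots,L_d$ of the components is admissible if $L_1\cup\dots\cup L_i$ is connected for all $i$; then each $i\ge2$ has a unique $\tau(i)<i$ with $L_i\cap L_{\tau(i)}\ne\emptyset$, and $\tau$ is the type. $T(3,d,\tau)$ is the set of degree $d$ trees with an admissible ordering of type $\tau$. For the cubic surface $W$, $h^0(\mathcal{O}_W(t))=\binom{t+3}{3}-\binom{t}{3}$ and $x_t:=\lfloor h^0(\mathcal{O}_W(t))/3\rfloor$. Assertion $H(t)$: there is a type $\tau$ for degree $x_t$ trees such that $h^1(W,\mathcal{I}_{W\cap Y,W}(t))=0$ for a general $Y\in T(3,x_t,\tau)$ meeting $W$ transversally. *)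

theory Defs
  imports "HOL-Analysis.Analysis"
begin

(* Vectors in C^4 are functions nat => complex of which only indices 0..3 are used.
   A nonzero such vector represents a point of P^3. *)
type_synonym vec4 = "nat \<Rightarrow> complex"

definition nz :: "vec4 \<Rightarrow> bool" where
  "nz p \<longleftrightarrow> (\<exists>i<4. p i \<noteq> 0)"

definition proj_eq :: "vec4 \<Rightarrow> vec4 \<Rightarrow> bool" where
  "proj_eq p q \<longleftrightarrow> (\<exists>c. c \<noteq> 0 \<and> (\<forall>i<4. q i = c * p i))"

definition lin_indep2 :: "vec4 \<Rightarrow> vec4 \<Rightarrow> bool" where
  "lin_indep2 a b \<longleftrightarrow> (\<forall>s t. (\<forall>i<4. s * a i + t * b i = 0) \<longrightarrow> s = 0 \<and> t = 0)"

definition on_line :: "vec4 \<Rightarrow> vec4 \<Rightarrow> vec4 \<Rightarrow> bool" where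
  "on_line a b p \<longleftrightarrow> nz p \<and> (\<exists>s t. \<forall>i<4. p i = s * a i + t * b i)"

definition cubic :: "(nat \<Rightarrow> complex) \<Rightarrow> vec4 \<Rightarrow> complex" where
  "cubic c p = (\<Sum>i<4. \<Sum>j\<in>{i..<4}. \<Sum>k\<in>{j..<4}. c (16*i + 4*j + k) * p i * p j * p k)"

definition quartic :: "(nat \<Rightarrow> complex) \<Rightarrow> vec4 \<Rightarrow> complex" where
  "quartic g p = (\<Sum>i<4. \<Sum>j\<in>{i..<4}. \<Sum>k\<in>{j..<4}. \<Sum>l\<in>{k..<4}.
      g (64*i + 16*j + 4*k + l) * p i * p j * p k * p l)"

inductive_set polyfun :: "((nat \<Rightarrow> complex) \<Rightarrow> complex) set" where
  const: "(\<lambda>x. a) \<in> polyfun"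
| var: "(\<lambda>x. x n) \<in> polyfun"
| add: "f \<in> polyfun \<Longrightarrow> g \<in> polyfun \<Longrightarrow> (\<lambda>x. f x + g x) \<in> polyfun"
| mult: "f \<in> polyfun \<Longrightarrow> g \<in> polyfun \<Longrightarrow> (\<lambda>x. f x * g x) \<in> polyfun"

(* "a general element x of S (an irreducible parameter set) satisfies P":
   P holds on the complement in S of the zero set of a polynomial not vanishing identically on S *)
definition general_on :: "(nat \<Rightarrow> complex) set \<Rightarrow> ((nat \<Rightarrow> complex) \<Rightarrow> bool) \<Rightarrow> bool" where
  "general_on S P \<longleftrightarrow> (\<exists>f\<in>polyfun. (\<exists>x\<in>S. f x \<noteq> 0) \<and> (\<forall>x\<in>S. f x \<noteq> 0 \<longrightarrow> P x))"

definition h0W :: "nat \<Rightarrow> nat" where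
  "h0W t = ((t + 3) choose 3) - (t choose 3)"

definition xt :: "nat \<Rightarrow> nat" where
  "xt t = h0W t div 3"

definition is_type :: "nat \<Rightarrow> (nat \<Rightarrow> nat) \<Rightarrow> bool" where
  "is_type d \<tau> \<longleftrightarrow> (\<forall>i\<in>{2..d}. 1 \<le> \<tau> i \<and> \<tau> i < i)"

(* parameters x encode lines L_1..L_d: L_i is spanned by lnA x i and lnB x i *)
definition lnA :: "(nat \<Rightarrow> complex) \<Rightarrow> nat \<Rightarrow> vec4" where
  "lnA x i = (\<lambda>k. x (8*i + k))"

definition lnB :: "(nat \<Rightarrow> complex) \<Rightarrow> nat \<Rightarrow> vec4" where
  "lnB x i = (\<lambda>k. x (8*i + 4 + k))"

definition on_L :: "(nat \<Rightarrow> complex) \<Rightarrow> nat \<Rightarrow> vec4 \<Rightarrow> bool" where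
  "on_L x i p \<longleftrightarrow> on_line (lnA x i) (lnB x i) p"

definition meets :: "(nat \<Rightarrow> complex) \<Rightarrow> nat \<Rightarrow> nat \<Rightarrow> bool" where
  "meets x i j \<longleftrightarrow> (\<exists>p. on_L x i p \<and> on_L x j p)"

(* T(3,d,tau): the lines L_1..L_d are pairwise distinct, and L_i meets L_j (i ~= j) exactly
   when j = tau i or i = tau j; i.e. Y = union of L_i is a connected nodal curve of arithmetic
   genus 0 (dual graph the tree given by tau) and 1..d is an admissible ordering of type tau *)
definition T3 :: "nat \<Rightarrow> (nat \<Rightarrow> nat) \<Rightarrow> (nat \<Rightarrow> complex) set" where
  "T3 d \<tau> = {x. (\<forall>i\<in>{1..d}. lin_indep2 (lnA x i) (lnB x i)) \<and>
     (\<forall>i\<in>{1..d}. \<forall>j\<in>{1..d}. i \<noteq> j \<longrightarrow>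
        (\<exists>p. on_L x i p \<and> \<not> on_L x j p) \<and>
        (meets x i j \<longleftrightarrow> ((2 \<le> i \<and> j = \<tau> i) \<or> (2 \<le> j \<and> i = \<tau> j))))}"

(* Y meets the cubic surface W = {cubic c = 0} transversally: at every point p of W \<inter> Y,
   p lies on only one line L_i of Y and the directional derivative of the cubic along L_i is
   nonzero (W smooth at p, L_i not tangent to W) *)
definition transversal :: "nat \<Rightarrow> (nat \<Rightarrow> complex) \<Rightarrow> (nat \<Rightarrow> complex) \<Rightarrow> bool" where
  "transversal d c x \<longleftrightarrow> (\<forall>i\<in>{1..d}. \<forall>p. on_L x i p \<and> cubic c p = 0 \<longrightarrow>
      (\<forall>j\<in>{1..d}. j \<noteq> i \<longrightarrow> \<not> on_L x j p) \<and>
      (\<forall>q. on_L x i q \<and> \<not> proj_eq p q \<longrightarrow>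
         deriv (\<lambda>e. cubic c (\<lambda>k. p k + e * q k)) 0 \<noteq> 0))"

definition WY :: "nat \<Rightarrow> (nat \<Rightarrow> complex) \<Rightarrow> (nat \<Rightarrow> complex) \<Rightarrow> vec4 set" where
  "WY d c x = {p. (\<exists>i\<in>{1..d}. on_L x i p) \<and> cubic c p = 0}"

(* h^1(W, I_{W\<inter>Y,W}(t)) = 0 for t = 4, i.e. the (reduced, finite) scheme W \<inter> Y imposes
   independent conditions on quartic forms: for each of its points there is a quartic not
   vanishing there but vanishing at all other points *)
definition h1_vanish4 :: "nat \<Rightarrow> (nat \<Rightarrow> complex) \<Rightarrow> (nat \<Rightarrow> complex) \<Rightarrow> bool" where
  "h1_vanish4 d c x \<longleftrightarrow> (\<forall>p\<in>WY d c x. \<exists>g. quartic g p \<noteq> 0 \<and>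
       (\<forall>q\<in>WY d c x. \<not> proj_eq p q \<longrightarrow> quartic g q = 0))"

end

theory Submission
  imports Defs "Jordan_Normal_Form.Determinant" "HOL-Number_Theory.Cong" "HOL-Library.More_List"
begin

text \<open>Take the chain type \<open>\<tau> i = i - 1\<close> and write \<open>L\<^sub>j = {u A\<^sub>j + B\<^sub>j}\<close>. A quartic restricts to
  a binary quartic on each line, determined by its values at \<open>u = 0, \<dots>, 4\<close>, and \<open>W \<inter> L\<^sub>j\<close> is
  given by the roots of the restricted cubic \<open>F\<^sub>j\<close>. Sampling the 35 quartic monomials and fifteen
  polynomials \<open>u\<^sup>e F\<^sub>j\<close> at these 50 points gives a square matrix, polynomial in \<open>(W, Y)\<close>.
  Where it is nonsingular and every \<open>F\<^sub>j\<close> has degree 3, any family of binary quartics on the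
  lines is the restriction of one quartic modulo the \<open>F\<^sub>j\<close>; a family vanishing at all points
  of \<open>W \<inter> Y\<close> but one gives a quartic separating that point, which is \<open>h\<^sup>1 = 0\<close>. The
  determinant times the leading coefficients of the \<open>F\<^sub>j\<close> is therefore a polynomial condition,
  and it is nonzero at an explicit integral chain of lines and integral cubic, as certified by
  an LU factorisation modulo 1009.\<close>

definition cubic_form :: "(nat \<Rightarrow> 'a::comm_ring_1) \<Rightarrow> (nat \<Rightarrow> 'a) \<Rightarrow> 'a" where
  "cubic_form c p = (\<Sum>i<4. \<Sum>j\<in>{i..<4}. \<Sum>k\<in>{j..<4}. c (16*i + 4*j + k) * p i * p j * p k)"

lemma cubic_eq_cubic_form: "cubic = cubic_form"
  by (intro ext) (simp add: cubic_def cubic_form_def)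

lemma cubic_form_cong: "(\<And>i. i < 4 \<Longrightarrow> p i = q i) \<Longrightarrow> cubic_form c p = cubic_form c q"
  unfolding cubic_form_def by (intro sum.cong refl) auto

lemma cubic_form_scale: "cubic_form c (\<lambda>i. t * p i) = t ^ 3 * cubic_form c p"
  unfolding cubic_form_def by (simp add: sum_distrib_left algebra_simps power3_eq_cube)

lemma of_int_cubic_form:
  "cubic_form (\<lambda>n. of_int (c n)) (\<lambda>i. of_int (p i)) = (of_int (cubic_form c p) :: 'a::comm_ring_1)"
  by (simp add: cubic_form_def)

lemma quartic_cong: "(\<And>i. i < 4 \<Longrightarrow> p i = q i) \<Longrightarrow> quartic g p = quartic g q"
  unfolding quartic_def by (intro sum.cong refl) auto

lemma quartic_scale: "quartic g (\<lambda>i. t * p i) = t ^ 4 * quartic g p"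
  unfolding quartic_def by (simp add: sum_distrib_left algebra_simps power4_eq_xxxx)

lemma quartic_add_scaled: "quartic (\<lambda>n. s * g n + h n) p = s * quartic g p + quartic h p"
  by (simp add: quartic_def sum.distrib sum_distrib_left algebra_simps)

lemma quartic_zero: "quartic (\<lambda>n. 0) p = 0"
  by (simp add: quartic_def)

lemma base4_step_eq:
  fixes m m' l l' :: nat
  assumes "l < 4" "l' < 4"
  shows "4 * m + l = 4 * m' + l' \<longleftrightarrow> m = m' \<and> l = l'"
  using assms by presburger

lemma sum_if_const_cond: "(\<Sum>x\<in>S. if P then f x else 0) = (if P then sum f S else 0)"
  by simp

lemma quartic_monomial:
  assumes "a \<le> b" "b \<le> d" "d \<le> e" "e < (4::nat)"
  shows "quartic (\<lambda>n. if n = 64*a + 16*b + 4*d + e then 1 else 0) p = p a * p b * p d * p e"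
    (is "quartic ?g p = ?m")
proof -
  have summand: "?g (64*i + 16*j + 4*k + l) * p i * p j * p k * p l =
      (if i = a then if j = b then if k = d then if l = e then ?m else 0 else 0 else 0 else 0)"
    if "j < 4" "k < 4" "l < 4" for i j k l :: nat
  proof -
    have "64*i + 16*j + 4*k + l = 4 * (4 * (4 * i + j) + k) + l"
      "64*a + 16*b + 4*d + e = 4 * (4 * (4 * a + b) + d) + e" by simp_all
    then show ?thesis using that assms by (simp only: base4_step_eq) auto
  qed
  have "quartic ?g p = (\<Sum>i<4. \<Sum>j\<in>{i..<4}. \<Sum>k\<in>{j..<4}. \<Sum>l\<in>{k..<4}.
       if i = a then if j = b then if k = d then if l = e then ?m else 0 else 0 else 0 else 0)"
    unfolding quartic_def by (intro sum.cong refl summand) auto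
  also have "\<dots> = ?m"
    using assms by (simp only: sum_if_const_cond sum.delta finite_atLeastLessThan finite_lessThan) simp
  finally show ?thesis .
qed

definition line_point :: "(nat \<Rightarrow> 'a::comm_ring_1) \<Rightarrow> (nat \<Rightarrow> 'a) \<Rightarrow> 'a \<Rightarrow> nat \<Rightarrow> 'a" where
  "line_point a b u = (\<lambda>k. u * a k + b k)"

definition line_cubic :: "(nat \<Rightarrow> 'a::comm_ring_1) \<Rightarrow> (nat \<Rightarrow> 'a) \<Rightarrow> (nat \<Rightarrow> 'a) \<Rightarrow> 'a poly" where
  "line_cubic c a b = (\<Sum>i<4. \<Sum>j\<in>{i..<4}. \<Sum>k\<in>{j..<4}.
     Polynomial.smult (c (16*i + 4*j + k)) ([:b i, a i:] * [:b j, a j:] * [:b k, a k:]))"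

lemma poly_line_cubic: "poly (line_cubic c a b) u = cubic_form c (line_point a b u)"
  by (simp add: line_cubic_def cubic_form_def line_point_def poly_sum mult.assoc algebra_simps)

lemma degree_linear_cube: "degree ([:b0, a0:] * [:b1, a1:] * [:b2, a2:]) \<le> 3"
  by (rule order.trans[OF degree_mult_le]) (simp add: order.trans[OF degree_mult_le])

lemma degree_line_cubic: "degree (line_cubic c a b) \<le> 3"
  unfolding line_cubic_def
  by (intro degree_sum_le finite_lessThan finite_atLeastLessThan
        order.trans[OF Polynomial.degree_smult_le degree_linear_cube])

lemma coeff_line_cubic_3: "coeff (line_cubic c a b) 3 = cubic_form c a"
  by (simp add: line_cubic_def cubic_form_def coeff_sum numeral_3_eq_3 coeff_pCons_Suc ac_simps)

lemma line_cubic_nonzero: "cubic c a \<noteq> 0 \<Longrightarrow> line_cubic c a b \<noteq> 0"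
  using coeff_line_cubic_3[of c a b] by (auto simp: cubic_eq_cubic_form)

lemma zero_of_cubic_on_line:
  fixes a b q :: vec4
  assumes lead: "cubic c a \<noteq> 0" and on: "on_line a b q" and zero: "cubic c q = 0"
  obtains t u where "t \<noteq> 0" "\<And>k. k < 4 \<Longrightarrow> q k = t * line_point a b u k"
    "poly (line_cubic c a b) u = 0"
proof -
  from on obtain s t where "nz q" and q: "\<And>k. k < 4 \<Longrightarrow> q k = s * a k + t * b k"
    unfolding on_line_def by blast
  have "t \<noteq> 0"
  proof
    assume "t = 0"
    then have "cubic c q = cubic_form c (\<lambda>k. s * a k)"
      unfolding cubic_eq_cubic_form using q by (intro cubic_form_cong) simp
    also have "\<dots> = s ^ 3 * cubic c a"
      by (simp add: cubic_eq_cubic_form cubic_form_scale)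
    finally have "s = 0" using zero lead by simp
    with \<open>t = 0\<close> \<open>nz q\<close> q show False by (auto simp: nz_def)
  qed
  define u where "u = s / t"
  have q_param: "q k = t * line_point a b u k" if "k < 4" for k
    using q[OF that] \<open>t \<noteq> 0\<close> by (simp add: line_point_def u_def field_simps)
  then have "cubic c q = cubic_form c (\<lambda>k. t * line_point a b u k)"
    unfolding cubic_eq_cubic_form by (intro cubic_form_cong)
  also have "\<dots> = t ^ 3 * poly (line_cubic c a b) u"
    by (simp add: cubic_form_scale poly_line_cubic)
  finally have "poly (line_cubic c a b) u = 0" using zero \<open>t \<noteq> 0\<close> by simp
  with \<open>t \<noteq> 0\<close> q_param show thesis by (rule that)
qed

lemma WY_parametrization:
  assumes lead: "\<And>j. j \<in> {1..d} \<Longrightarrow> cubic c (lnA x j) \<noteq> 0" and q: "q \<in> WY d c x"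
  obtains j t u where "j \<in> {1..d}" "t \<noteq> 0"
    "\<And>k. k < 4 \<Longrightarrow> q k = t * line_point (lnA x j) (lnB x j) u k"
    "poly (line_cubic c (lnA x j) (lnB x j)) u = 0"
proof -
  from q obtain j where "j \<in> {1..d}" "on_line (lnA x j) (lnB x j) q" "cubic c q = 0"
    unfolding WY_def on_L_def by blast
  with lead zero_of_cubic_on_line that show thesis by metis
qed

lemma poly_vanishing_at_other_roots:
  fixes F :: "'a::idom poly"
  assumes "F \<noteq> 0"
  obtains h where "degree h \<le> degree F" "poly h u0 \<noteq> 0"
    "\<And>u. poly F u = 0 \<Longrightarrow> u \<noteq> u0 \<Longrightarrow> poly h u = 0"
proof -
  define R where "R = {u. poly F u = 0} - {u0}"
  have "finite R" unfolding R_def using poly_roots_finite[OF assms] by simp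
  have "card R \<le> card {u. poly F u = 0}"
    by (rule card_mono[OF poly_roots_finite[OF assms]]) (auto simp: R_def)
  also have "\<dots> \<le> degree F" by (rule card_poly_roots_bound[OF assms])
  finally have "card R \<le> degree F" .
  define h where "h = (\<Prod>r\<in>R. [:- r, 1:])"
  have "degree h \<le> sum (degree \<circ> (\<lambda>r. [:- r, 1:])) R"
    unfolding h_def using \<open>finite R\<close> by (rule degree_prod_sum_le)
  with \<open>card R \<le> degree F\<close> have "degree h \<le> degree F" by simp
  have h_root: "poly h u = 0 \<longleftrightarrow> u \<in> R" for u
    unfolding h_def using \<open>finite R\<close> by (auto simp: poly_prod prod_zero_iff add_eq_0_iff)
  show thesis
  proof (rule that)
    show "degree h \<le> degree F" by fact
    show "poly h u0 \<noteq> 0" using h_root by (simp add: R_def)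
    show "poly h u = 0" if "poly F u = 0" "u \<noteq> u0" for u
      using h_root that by (simp add: R_def)
  qed
qed

section \<open>Restricting quartics to the lines of a tree\<close>

text \<open>The columns of the restriction matrix: \<open>Monomial a b d e\<close> is the quartic monomial
  \<open>x\<^sub>a x\<^sub>b x\<^sub>d x\<^sub>e\<close>, restricted to each line; \<open>Multiple j e\<close> is \<open>u\<^sup>e F\<^sub>j\<close> on the line \<open>L\<^sub>j\<close> and
  zero on the other lines.\<close>

datatype column = Monomial nat nat nat nat | Multiple nat nat

fun column_ok :: "column \<Rightarrow> bool" where
  "column_ok (Monomial a b d e) \<longleftrightarrow> a \<le> b \<and> b \<le> d \<and> d \<le> e \<and> e < 4"
| "column_ok (Multiple j e) \<longleftrightarrow> e \<le> 1"

fun column_value :: "(nat \<Rightarrow> 'a::comm_ring_1) \<Rightarrow> (nat \<Rightarrow> nat \<Rightarrow> 'a) \<Rightarrow> (nat \<Rightarrow> nat \<Rightarrow> 'a) \<Rightarrow>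
    column \<Rightarrow> nat \<Rightarrow> 'a \<Rightarrow> 'a" where
  "column_value c A B (Monomial a b d e) j u =
     line_point (A j) (B j) u a * line_point (A j) (B j) u b *
     line_point (A j) (B j) u d * line_point (A j) (B j) u e"
| "column_value c A B (Multiple i e) j u =
     (if i = j then u ^ e * cubic_form c (line_point (A j) (B j) u) else 0)"

fun column_poly :: "(nat \<Rightarrow> 'a::comm_ring_1) \<Rightarrow> (nat \<Rightarrow> nat \<Rightarrow> 'a) \<Rightarrow> (nat \<Rightarrow> nat \<Rightarrow> 'a) \<Rightarrow>
    column \<Rightarrow> nat \<Rightarrow> 'a poly" where
  "column_poly c A B (Monomial a b d e) j =
     [:B j a, A j a:] * [:B j b, A j b:] * [:B j d, A j d:] * [:B j e, A j e:]"
| "column_poly c A B (Multiple i e) j =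
     (if i = j then monom 1 e * line_cubic c (A j) (B j) else 0)"

fun column_form :: "column \<Rightarrow> vec4 \<Rightarrow> complex" where
  "column_form (Monomial a b d e) p = p a * p b * p d * p e"
| "column_form (Multiple i e) p = 0"

text \<open>Row \<open>r\<close> samples the line \<open>L\<^bsub>r div 5 + 1\<^esub>\<close> at the parameter \<open>u = r mod 5\<close>.\<close>

definition restriction_matrix :: "column list \<Rightarrow> (nat \<Rightarrow> 'a::comm_ring_1) \<Rightarrow>
    (nat \<Rightarrow> nat \<Rightarrow> 'a) \<Rightarrow> (nat \<Rightarrow> nat \<Rightarrow> 'a) \<Rightarrow> 'a mat" where
  "restriction_matrix cs c A B = mat (length cs) (length cs)
     (\<lambda>(r, q). column_value c A B (cs ! q) (r div 5 + 1) (of_nat (r mod 5)))"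

definition column_combination :: "column list \<Rightarrow> (nat \<Rightarrow> 'a::comm_ring_1) \<Rightarrow>
    (nat \<Rightarrow> nat \<Rightarrow> 'a) \<Rightarrow> (nat \<Rightarrow> nat \<Rightarrow> 'a) \<Rightarrow> (nat \<Rightarrow> 'a) \<Rightarrow> nat \<Rightarrow> 'a poly" where
  "column_combination cs c A B z j = (\<Sum>q<length cs. Polynomial.smult (z q) (column_poly c A B (cs ! q) j))"

lemma poly_column_poly: "poly (column_poly c A B cl j) u = column_value c A B cl j u"
  by (cases cl) (simp_all add: poly_line_cubic poly_monom line_point_def algebra_simps)

lemma degree_column_poly: "column_ok cl \<Longrightarrow> degree (column_poly c A B cl j) \<le> 4"
proof (cases cl)
  case (Monomial a b d e)
  have "degree ([:B j a, A j a:] * [:B j b, A j b:] * [:B j d, A j d:] * [:B j e, A j e:]) \<le> 3 + 1"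
    by (rule order.trans[OF degree_mult_le add_mono[OF degree_linear_cube]]) simp
  then show ?thesis using Monomial by simp
next
  case (Multiple i e)
  moreover assume "column_ok cl"
  ultimately have "degree (monom (1::'a) e) \<le> 1" by (simp add: degree_monom_eq)
  then have "degree (monom (1::'a) e * line_cubic c (A j) (B j)) \<le> 1 + 3"
    by (intro order.trans[OF degree_mult_le] add_mono degree_line_cubic)
  then show ?thesis using Multiple by simp
qed

lemma degree_column_combination:
  "list_all column_ok cs \<Longrightarrow> degree (column_combination cs c A B z j) \<le> 4"
  unfolding column_combination_def
  by (intro degree_sum_le finite_lessThan order.trans[OF Polynomial.degree_smult_le] degree_column_poly)
    (auto simp: list_all_length)

lemma restriction_matrix_mult_vec:
  assumes "z \<in> carrier_vec (length cs)" "r < length cs"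
  shows "(restriction_matrix cs c A B *\<^sub>v z) $ r =
    poly (column_combination cs c A B (\<lambda>q. z $ q) (r div 5 + 1)) (of_nat (r mod 5))"
  using assms
  by (auto simp: column_combination_def poly_sum poly_column_poly restriction_matrix_def
      scalar_prod_def mult.commute lessThan_atLeast0 intro!: sum.cong)

lemma column_value_at_root:
  assumes "poly (line_cubic c (A j) (B j)) u = 0"
  shows "column_value c A B cl j u = column_form cl (line_point (A j) (B j) u)"
  using assms by (cases cl) (simp_all add: poly_line_cubic)

lemma column_form_quartic:
  assumes "column_ok cl"
  obtains g where "\<And>p. quartic g p = column_form cl p"
proof (cases cl)
  case (Monomial a b d e)
  with assms quartic_monomial[of a b d e] show thesis by (intro that) auto
next
  case (Multiple i e)
  with quartic_zero show thesis by (intro that) auto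
qed

lemma quartic_column_combination:
  assumes "list_all column_ok cs"
  shows "\<exists>g. \<forall>p. quartic g p = (\<Sum>q<length cs. z q * column_form (cs ! q) p)"
  using assms
proof (induction cs rule: rev_induct)
  case Nil
  then show ?case using quartic_zero by auto
next
  case (snoc cl cs)
  then obtain g where g: "\<And>p. quartic g p = (\<Sum>q<length cs. z q * column_form (cs ! q) p)"
    by auto
  obtain h where h: "\<And>p. quartic h p = column_form cl p"
    using column_form_quartic snoc.prems by auto
  have "(\<Sum>q<length cs. z q * column_form ((cs @ [cl]) ! q) p) =
      (\<Sum>q<length cs. z q * column_form (cs ! q) p)" for p
    by (intro sum.cong) (auto simp: nth_append)
  then show ?case
    by (intro exI[of _ "\<lambda>n. z (length cs) * h n + g n"]) (simp add: quartic_add_scaled g h)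
qed

lemma nonsingular_mat_mult_vec_solvable:
  fixes A :: "'a::field mat"
  assumes A: "A \<in> carrier_mat n n" and det: "det A \<noteq> 0" and y: "y \<in> carrier_vec n"
  obtains z where "z \<in> carrier_vec n" "A *\<^sub>v z = y"
proof -
  from det_non_zero_imp_unit[OF A det, of "()"]
  obtain B where AB: "A * B = 1\<^sub>m n" and B: "B \<in> carrier_mat n n"
    unfolding Units_def ring_mat_def by auto
  have "A *\<^sub>v (B *\<^sub>v y) = (A * B) *\<^sub>v y"
    using A B y by (simp add: assoc_mult_mat_vec)
  also have "\<dots> = y" using AB y by simp
  finally show thesis using B y by (intro that[of "B *\<^sub>v y"]) auto
qed

lemma card_of_nat_image_lessThan: "card (of_nat ` {..<n} :: 'a::semiring_char_0 set) = n"
  by (simp add: card_image inj_on_def)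

lemma quartic_interpolation_on_lines:
  fixes c :: "nat \<Rightarrow> complex" and A B :: "nat \<Rightarrow> vec4" and T :: "nat \<Rightarrow> complex poly"
  assumes ok: "list_all column_ok cs" and len: "length cs = 5 * d"
    and det: "det (restriction_matrix cs c A B) \<noteq> 0"
    and deg: "\<And>j. degree (T j) \<le> 4"
  obtains g where "\<And>j u. j \<in> {1..d} \<Longrightarrow> poly (line_cubic c (A j) (B j)) u = 0 \<Longrightarrow>
      quartic g (line_point (A j) (B j) u) = poly (T j) u"
proof -
  define y where "y = vec (length cs) (\<lambda>r. poly (T (r div 5 + 1)) (of_nat (r mod 5)))"
  obtain z where z: "z \<in> carrier_vec (length cs)" and Mz: "restriction_matrix cs c A B *\<^sub>v z = y"
    using nonsingular_mat_mult_vec_solvable[of "restriction_matrix cs c A B" "length cs" y] det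
    by (auto simp: restriction_matrix_def y_def)
  let ?P = "column_combination cs c A B (\<lambda>q. z $ q)"
  have P_eq_T: "?P j = T j" if j: "j \<in> {1..d}" for j
  proof (rule poly_eqI_degree[of "of_nat ` {..<5}"])
    fix v :: complex assume "v \<in> of_nat ` {..<5}"
    then obtain k where k: "k < 5" "v = of_nat k" by auto
    define r where "r = 5 * (j - 1) + k"
    have r: "r < length cs" "r div 5 + 1 = j" "r mod 5 = k"
      using j k len by (auto simp: r_def)
    show "poly (?P j) v = poly (T j) v"
      using restriction_matrix_mult_vec[where c = c and A = A and B = B, OF z r(1)] Mz r k
      by (simp add: y_def)
  next
    show "degree (?P j) < card (of_nat ` {..<5} :: complex set)"
      using degree_column_combination[OF ok, of c A B "\<lambda>q. z $ q" j] by (simp add: card_of_nat_image_lessThan)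
    show "degree (T j) < card (of_nat ` {..<5} :: complex set)"
      using deg[of j] by (simp add: card_of_nat_image_lessThan)
  qed
  obtain g where g: "\<And>p. quartic g p = (\<Sum>q<length cs. z $ q * column_form (cs ! q) p)"
    using quartic_column_combination[OF ok] by blast
  show thesis
  proof (rule that)
    fix j u assume j: "j \<in> {1..d}" and root: "poly (line_cubic c (A j) (B j)) u = 0"
    have "quartic g (line_point (A j) (B j) u) = poly (?P j) u"
      by (simp add: g column_value_at_root[where A = A and B = B, OF root] column_combination_def
          poly_sum poly_column_poly)
    with P_eq_T[OF j] show "quartic g (line_point (A j) (B j) u) = poly (T j) u" by simp
  qed
qed

lemma h1_vanish4_if_restriction_matrix_nonsingular:
  assumes ok: "list_all column_ok cs" and len: "length cs = 5 * d"
    and det: "det (restriction_matrix cs c (lnA x) (lnB x)) \<noteq> 0"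
    and lead: "\<And>j. j \<in> {1..d} \<Longrightarrow> cubic c (lnA x j) \<noteq> 0"
  shows "h1_vanish4 d c x"
  unfolding h1_vanish4_def
proof
  let ?F = "\<lambda>j. line_cubic c (lnA x j) (lnB x j)"
  let ?L = "\<lambda>j. line_point (lnA x j) (lnB x j)"
  fix p assume "p \<in> WY d c x"
  then obtain i t0 u0 where i: "i \<in> {1..d}" and "t0 \<noteq> 0"
    and p: "\<And>k. k < 4 \<Longrightarrow> p k = t0 * ?L i u0 k" and root0: "poly (?F i) u0 = 0"
    using WY_parametrization[OF lead] by metis
  obtain h where "degree h \<le> degree (?F i)" and "poly h u0 \<noteq> 0"
    and h: "\<And>u. poly (?F i) u = 0 \<Longrightarrow> u \<noteq> u0 \<Longrightarrow> poly h u = 0"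
    using poly_vanishing_at_other_roots[OF line_cubic_nonzero[OF lead[OF i]]] by blast
  then have deg: "degree (if j = i then h else 0) \<le> 4" for j
    using degree_line_cubic[of c "lnA x i" "lnB x i"] by simp
  obtain g where g: "\<And>j u. j \<in> {1..d} \<Longrightarrow> poly (?F j) u = 0 \<Longrightarrow>
      quartic g (?L j u) = poly (if j = i then h else 0) u"
    using quartic_interpolation_on_lines[where T = "\<lambda>j. if j = i then h else 0", OF ok len det deg]
    by blast
  have g_on_W: "quartic g q = t ^ 4 * poly (if j = i then h else 0) u"
    if "j \<in> {1..d}" "\<And>k. k < 4 \<Longrightarrow> q k = t * ?L j u k" "poly (?F j) u = 0" for q j t u
  proof -
    have "quartic g q = quartic g (\<lambda>k. t * ?L j u k)"
      using that(2) by (rule quartic_cong)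
    then show ?thesis using that by (simp add: quartic_scale g)
  qed
  show "\<exists>g. quartic g p \<noteq> 0 \<and> (\<forall>q\<in>WY d c x. \<not> proj_eq p q \<longrightarrow> quartic g q = 0)"
  proof (intro exI conjI ballI impI)
    show "quartic g p \<noteq> 0"
      using g_on_W[OF i p root0] \<open>t0 \<noteq> 0\<close> \<open>poly h u0 \<noteq> 0\<close> by simp
    fix q assume "q \<in> WY d c x" and not_p: "\<not> proj_eq p q"
    then obtain j t u where j: "j \<in> {1..d}" and "t \<noteq> 0"
      and q: "\<And>k. k < 4 \<Longrightarrow> q k = t * ?L j u k" and root: "poly (?F j) u = 0"
      using WY_parametrization[OF lead] by metis
    have "u \<noteq> u0" if "j = i"
    proof
      assume "u = u0"
      then have "proj_eq p q"
        unfolding proj_eq_def using p q \<open>j = i\<close> \<open>t0 \<noteq> 0\<close> \<open>t \<noteq> 0\<close>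
        by (intro exI[of _ "t / t0"]) auto
      with not_p show False ..
    qed
    then show "quartic g q = 0"
      using g_on_W[OF j q root] h root by auto
  qed
qed

section \<open>The nondegeneracy condition is polynomial\<close>

lemma polyfun_sum:
  "finite S \<Longrightarrow> (\<And>s. s \<in> S \<Longrightarrow> f s \<in> polyfun) \<Longrightarrow> (\<lambda>v. \<Sum>s\<in>S. f s v) \<in> polyfun"
  by (induction S rule: finite_induct) (simp_all add: polyfun.const polyfun.add)

lemma polyfun_prod:
  "finite S \<Longrightarrow> (\<And>s. s \<in> S \<Longrightarrow> f s \<in> polyfun) \<Longrightarrow> (\<lambda>v. \<Prod>s\<in>S. f s v) \<in> polyfun"
  by (induction S rule: finite_induct) (simp_all add: polyfun.const polyfun.mult)

lemma polyfun_det: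
  assumes "\<And>v. M v \<in> carrier_mat n n"
    and "\<And>i j. i < n \<Longrightarrow> j < n \<Longrightarrow> (\<lambda>v. M v $$ (i, j)) \<in> polyfun"
  shows "(\<lambda>v. det (M v)) \<in> polyfun"
proof -
  have "det (M v) = (\<Sum>p\<in>{p. p permutes {0..<n}}. signof p * (\<Prod>i=0..<n. M v $$ (i, p i)))" for v
    by (rule det_def'[OF assms(1)])
  moreover have "(\<lambda>v. \<Sum>p\<in>{p. p permutes {0..<n}}. signof p * (\<Prod>i=0..<n. M v $$ (i, p i))) \<in> polyfun"
    using assms(2) by (intro polyfun_sum polyfun_prod polyfun.mult polyfun.const finite_permutations
        finite_atLeastLessThan) (auto simp: permutes_in_image)
  ultimately show ?thesis by simp
qed

lemma polyfun_cubic_form: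
  "(\<And>n. (\<lambda>v. C v n) \<in> polyfun) \<Longrightarrow> (\<And>k. (\<lambda>v. P v k) \<in> polyfun) \<Longrightarrow>
    (\<lambda>v. cubic_form (C v) (P v)) \<in> polyfun"
  unfolding cubic_form_def
  by (intro polyfun_sum polyfun.mult finite_lessThan finite_atLeastLessThan) auto

lemma polyfun_line_point:
  "(\<lambda>v. a v k) \<in> polyfun \<Longrightarrow> (\<lambda>v. b v k) \<in> polyfun \<Longrightarrow> (\<lambda>v. line_point (a v) (b v) u k) \<in> polyfun"
  unfolding line_point_def by (intro polyfun.add polyfun.mult polyfun.const)

lemma polyfun_column_value:
  assumes "\<And>n. (\<lambda>v. C v n) \<in> polyfun"
    and "\<And>j k. (\<lambda>v. A v j k) \<in> polyfun" and "\<And>j k. (\<lambda>v. B v j k) \<in> polyfun"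
  shows "(\<lambda>v. column_value (C v) (A v) (B v) cl j u) \<in> polyfun"
proof (cases cl)
  case (Multiple i e)
  then show ?thesis using assms
    by (cases "i = j") (auto intro!: polyfun.mult polyfun.const polyfun_cubic_form polyfun_line_point)
qed (use assms in \<open>auto intro!: polyfun.mult polyfun_line_point\<close>)

definition nondegeneracy :: "column list \<Rightarrow> nat \<Rightarrow> (nat \<Rightarrow> complex) \<Rightarrow> (nat \<Rightarrow> complex) \<Rightarrow> complex" where
  "nondegeneracy cs d c x =
     det (restriction_matrix cs c (lnA x) (lnB x)) * (\<Prod>j\<in>{1..d}. cubic c (lnA x j))"

lemma polyfun_nondegeneracy:
  assumes C: "\<And>n. (\<lambda>v. C v n) \<in> polyfun" and X: "\<And>n. (\<lambda>v. X v n) \<in> polyfun"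
  shows "(\<lambda>v. nondegeneracy cs d (C v) (X v)) \<in> polyfun"
  unfolding nondegeneracy_def cubic_eq_cubic_form
proof (intro polyfun.mult polyfun_prod polyfun_det finite_atLeastAtMost)
  show "restriction_matrix cs (C v) (lnA (X v)) (lnB (X v)) \<in> carrier_mat (length cs) (length cs)" for v
    by (simp add: restriction_matrix_def)
  show "(\<lambda>v. restriction_matrix cs (C v) (lnA (X v)) (lnB (X v)) $$ (i, j)) \<in> polyfun"
    if "i < length cs" "j < length cs" for i j
    using that C X by (simp add: restriction_matrix_def lnA_def lnB_def polyfun_column_value)
  show "(\<lambda>v. cubic_form (C v) (lnA (X v) j)) \<in> polyfun" for j
    using C X by (simp add: lnA_def polyfun_cubic_form)
qed

lemma h1_vanish4_if_nondegenerate: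
  "list_all column_ok cs \<Longrightarrow> length cs = 5 * d \<Longrightarrow> nondegeneracy cs d c x \<noteq> 0 \<Longrightarrow> h1_vanish4 d c x"
  unfolding nondegeneracy_def
  by (rule h1_vanish4_if_restriction_matrix_nonsingular) auto

section \<open>Nonvanishing determinants from LU factorisations modulo \<open>m\<close>\<close>

lemma sum_list_map2_times_eq_sum_nth_default:
  fixes xs ys :: "'a::comm_semiring_0 list"
  assumes "length xs \<le> N" "length ys \<le> N"
  shows "sum_list (map2 (*) xs ys) = (\<Sum>k<N. nth_default 0 xs k * nth_default 0 ys k)"
  using assms
proof (induction xs arbitrary: ys N)
  case Nil
  then show ?case by simp
next
  case (Cons x xs)
  then obtain N' where N: "N = Suc N'" by (cases N) auto
  show ?case
  proof (cases ys)
    case Nil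
    then show ?thesis by simp
  next
    case (Cons y ys')
    then show ?thesis using Cons.IH[where ys = ys' and N = N'] Cons.prems N
      by (simp add: sum.lessThan_Suc_shift del: sum.lessThan_Suc)
  qed
qed

lemma list_all_enumerate_0_iff:
  "list_all (\<lambda>(i, x). P i x) (List.enumerate 0 xs) \<longleftrightarrow> (\<forall>i<length xs. P i (xs ! i))"
proof -
  have "List.enumerate 0 xs = map (\<lambda>i. (i, xs ! i)) [0..<length xs]"
    by (intro nth_equalityI) (simp_all add: nth_enumerate_eq)
  then show ?thesis by (auto simp: list_all_iff)
qed

text \<open>The rows of a unit lower triangular matrix and the columns of an upper triangular one,
  stored without their zero entries.\<close>

definition lower_mat :: "nat \<Rightarrow> 'a::zero list list \<Rightarrow> 'a mat" where
  "lower_mat n L = mat n n (\<lambda>(i, j). nth_default 0 (L ! i) j)"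

definition upper_mat :: "nat \<Rightarrow> 'a::zero list list \<Rightarrow> 'a mat" where
  "upper_mat n U = mat n n (\<lambda>(i, j). nth_default 0 (U ! j) i)"

lemma det_lower_mat:
  assumes "\<And>i. i < n \<Longrightarrow> length (L ! i) = Suc i \<and> last (L ! i) = 1"
  shows "det (lower_mat n L) = (1::'a::comm_ring_1)"
proof -
  have diag: "L ! i ! i = 1" if "i < n" for i
  proof -
    have "L ! i \<noteq> []" using assms[OF that] by auto
    with assms[OF that] show ?thesis by (auto simp: last_conv_nth)
  qed
  have "det (lower_mat n L) = prod_list (diag_mat (lower_mat n L))"
    by (rule det_lower_triangular[where n = n]) (auto simp: lower_mat_def nth_default_def assms)
  also have "diag_mat (lower_mat n L) = map (\<lambda>i. 1) [0..<n]"
    by (auto simp: diag_mat_def lower_mat_def nth_default_def assms diag intro!: nth_equalityI)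
  finally show ?thesis by (simp add: map_replicate_const)
qed

lemma det_upper_mat:
  assumes "length U = n" "\<And>j. j < n \<Longrightarrow> length (U ! j) = Suc j"
  shows "det (upper_mat n U) = (prod_list (map last U) :: 'a::comm_ring_1)"
proof -
  have diag: "last (U ! j) = U ! j ! j" if "j < n" for j
  proof -
    have "U ! j \<noteq> []" using assms(2)[OF that] by auto
    with assms(2)[OF that] show ?thesis by (auto simp: last_conv_nth)
  qed
  have "det (upper_mat n U) = prod_list (diag_mat (upper_mat n U))"
    by (rule det_upper_triangular[where n = n])
      (auto simp: upper_triangular_def upper_mat_def nth_default_def assms)
  also have "diag_mat (upper_mat n U) = map last U"
    by (auto simp: diag_mat_def upper_mat_def nth_default_def assms diag intro!: nth_equalityI)
  finally show ?thesis .
qed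

lemma lower_mat_mult_upper_mat:
  fixes L U :: "'a::comm_ring_1 list list"
  assumes "i < n" "j < n" "length (L ! i) \<le> n" "length (U ! j) \<le> n"
  shows "(lower_mat n L * upper_mat n U) $$ (i, j) = sum_list (map2 (*) (L ! i) (U ! j))"
proof -
  have "(lower_mat n L * upper_mat n U) $$ (i, j) = (\<Sum>k<n. nth_default 0 (L ! i) k * nth_default 0 (U ! j) k)"
    using assms by (auto simp: lower_mat_def upper_mat_def scalar_prod_def lessThan_atLeast0 intro!: sum.cong)
  also have "\<dots> = sum_list (map2 (*) (L ! i) (U ! j))"
    using assms by (intro sum_list_map2_times_eq_sum_nth_default[symmetric])
  finally show ?thesis .
qed

lemma det_cong_mod:
  fixes A B :: "int mat"
  assumes A: "A \<in> carrier_mat n n" and B: "B \<in> carrier_mat n n"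
    and entries: "\<And>i j. i < n \<Longrightarrow> j < n \<Longrightarrow> [A $$ (i, j) = B $$ (i, j)] (mod m)"
  shows "[det A = det B] (mod m)"
  unfolding det_def'[OF A] det_def'[OF B]
  by (intro cong_sum cong_mult cong_refl cong_prod entries) (auto simp: permutes_in_image)

definition lu_certificate :: "int \<Rightarrow> nat \<Rightarrow> (nat \<Rightarrow> nat \<Rightarrow> int) \<Rightarrow> int list list \<Rightarrow> int list list \<Rightarrow> bool" where
  "lu_certificate m n a L U \<longleftrightarrow>
     length L = n \<and> length U = n \<and>
     list_all (\<lambda>(i, row). length row = Suc i \<and> last row = 1) (List.enumerate 0 L) \<and>
     list_all (\<lambda>(j, col). length col = Suc j) (List.enumerate 0 U) \<and>
     prod_list (map last U) mod m \<noteq> 0 \<and>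
     list_all (\<lambda>(i, row). list_all (\<lambda>(j, col). (sum_list (map2 (*) row col) - a i j) mod m = 0)
       (List.enumerate 0 U)) (List.enumerate 0 L)"

lemma det_nonzero_if_lu_certificate:
  assumes "lu_certificate m n a L U"
  shows "det (mat n n (\<lambda>(i, j). a i j)) \<noteq> 0"
proof
  assume det0: "det (mat n n (\<lambda>(i, j). a i j)) = 0"
  from assms have "length U = n"
    and L: "\<And>i. i < n \<Longrightarrow> length (L ! i) = Suc i \<and> last (L ! i) = 1"
    and U: "\<And>j. j < n \<Longrightarrow> length (U ! j) = Suc j"
    and diag: "prod_list (map last U) mod m \<noteq> 0"
    and entries: "\<And>i j. i < n \<Longrightarrow> j < n \<Longrightarrow> (sum_list (map2 (*) (L ! i) (U ! j)) - a i j) mod m = 0"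
    unfolding lu_certificate_def list_all_enumerate_0_iff by auto
  have "[det (mat n n (\<lambda>(i, j). a i j)) = det (lower_mat n L * upper_mat n U)] (mod m)"
  proof (rule det_cong_mod)
    fix i j assume ij: "i < n" "j < n"
    with L U have "(lower_mat n L * upper_mat n U) $$ (i, j) = sum_list (map2 (*) (L ! i) (U ! j))"
      by (intro lower_mat_mult_upper_mat) auto
    with ij entries[OF ij]
    show "[mat n n (\<lambda>(i, j). a i j) $$ (i, j) = (lower_mat n L * upper_mat n U) $$ (i, j)] (mod m)"
      by (simp add: cong_iff_dvd_diff mod_eq_0_iff_dvd dvd_diff_commute)
  qed (auto simp: lower_mat_def upper_mat_def)
  moreover have "det (lower_mat n L * upper_mat n U) = prod_list (map last U)"
    using det_mult[of "lower_mat n L" n "upper_mat n U"] det_lower_mat[OF L] det_upper_mat[OF \<open>length U = n\<close> U]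
    by (simp add: lower_mat_def upper_mat_def)
  ultimately show False
    using det0 diag by (simp add: cong_def)
qed

section \<open>Chains of lines\<close>

definition det2 :: "'a::comm_ring_1 \<Rightarrow> 'a \<Rightarrow> 'a \<Rightarrow> 'a \<Rightarrow> 'a" where
  "det2 a b c d = a * d - b * c"

definition linear_form :: "(nat \<Rightarrow> 'a::comm_ring_1) \<Rightarrow> (nat \<Rightarrow> 'a) \<Rightarrow> 'a" where
  "linear_form f p = (\<Sum>k<4. f k * p k)"

lemma linear_form_combination:
  "(\<And>k. k < 4 \<Longrightarrow> p k = s * a k + t * b k) \<Longrightarrow>
    linear_form f p = s * linear_form f a + t * linear_form f b"
  by (simp add: linear_form_def sum_distrib_left sum.distrib algebra_simps)

lemma homogeneous_2x2_trivial:
  fixes s t :: "'a::idom"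
  assumes "s * a + t * b = 0" "s * c + t * d = 0" "det2 a b c d \<noteq> 0"
  shows "s = 0 \<and> t = 0"
proof -
  have "s * det2 a b c d = d * (s * a + t * b) - b * (s * c + t * d)"
    "t * det2 a b c d = a * (s * c + t * d) - c * (s * a + t * b)"
    by (simp_all add: det2_def algebra_simps)
  then have "s * det2 a b c d = 0" "t * det2 a b c d = 0"
    by (simp_all only: assms(1,2) mult_zero_right diff_self)
  with assms(3) show ?thesis by simp
qed

lemma lin_indep2_if_det2:
  assumes "m < 4" "n < 4" "det2 (a m) (a n) (b m) (b n) \<noteq> 0"
  shows "lin_indep2 a b"
  unfolding lin_indep2_def
proof (intro allI impI)
  fix s t assume "\<forall>i<4. s * a i + t * b i = 0"
  with assms have "s * a m + t * b m = 0" "s * a n + t * b n = 0" by auto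
  with assms(3) show "s = 0 \<and> t = 0"
    by (intro homogeneous_2x2_trivial[of s "a m" t "b m" "a n" "b n"]) (simp_all add: det2_def algebra_simps)
qed

lemma on_line_base:
  assumes "lin_indep2 a b"
  shows "on_line a b a" "on_line a b b"
proof -
  have "nz a"
  proof (rule ccontr)
    assume "\<not> nz a"
    then have "\<forall>i<4. 1 * a i + 0 * b i = 0" by (simp add: nz_def)
    with assms have "(1::complex) = 0" unfolding lin_indep2_def by blast
    then show False by simp
  qed
  moreover have "nz b"
  proof (rule ccontr)
    assume "\<not> nz b"
    then have "\<forall>i<4. 0 * a i + 1 * b i = 0" by (simp add: nz_def)
    with assms have "(1::complex) = 0" unfolding lin_indep2_def by blast
    then show False by simp
  qed
  moreover have "\<forall>k<4. a k = 1 * a k + 0 * b k" "\<forall>k<4. b k = 0 * a k + 1 * b k"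
    by simp_all
  ultimately show "on_line a b a" "on_line a b b"
    unfolding on_line_def by blast+
qed

lemma linear_form_vanishes_on_line:
  assumes "linear_form f a = 0" "linear_form f b = 0" "on_line a b p"
  shows "linear_form f p = 0"
proof -
  from assms(3) obtain s t where "\<And>k. k < 4 \<Longrightarrow> p k = s * a k + t * b k"
    unfolding on_line_def by blast
  then show ?thesis by (simp add: linear_form_combination assms(1,2))
qed

lemma lines_disjoint_if_det2:
  assumes "linear_form f a = 0" "linear_form f b = 0" "linear_form g a = 0" "linear_form g b = 0"
    and det: "det2 (linear_form f a') (linear_form f b') (linear_form g a') (linear_form g b') \<noteq> 0"
  shows "\<not> (on_line a b p \<and> on_line a' b' p)"
proof
  assume "on_line a b p \<and> on_line a' b' p"
  then have "linear_form f p = 0" "linear_form g p = 0" and "nz p"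
    and p: "\<exists>s t. \<forall>k<4. p k = s * a' k + t * b' k"
    using assms linear_form_vanishes_on_line unfolding on_line_def by blast+
  then obtain s t where st: "\<And>k. k < 4 \<Longrightarrow> p k = s * a' k + t * b' k" by blast
  have "s = 0 \<and> t = 0"
    using \<open>linear_form f p = 0\<close> \<open>linear_form g p = 0\<close> det
    by (intro homogeneous_2x2_trivial) (simp_all add: linear_form_combination[OF st])
  with st \<open>nz p\<close> show False by (auto simp: nz_def)
qed

text \<open>\<open>P j\<close> and \<open>Q j\<close> are linear forms cutting out \<open>L\<^sub>j\<close>. Consecutive lines share the point
  \<open>A\<^bsub>i+1\<^esub>\<close>; any other two lines are disjoint because \<open>P i\<close> and \<open>Q i\<close> have no common zero on \<open>L\<^sub>j\<close>.\<close>

definition chain_certificate :: "nat \<Rightarrow> (nat \<Rightarrow> nat \<Rightarrow> 'a::comm_ring_1) \<Rightarrow> (nat \<Rightarrow> nat \<Rightarrow> 'a) \<Rightarrow>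
    (nat \<Rightarrow> nat \<Rightarrow> 'a) \<Rightarrow> (nat \<Rightarrow> nat \<Rightarrow> 'a) \<Rightarrow> bool" where
  "chain_certificate d A B P Q \<longleftrightarrow>
     (\<forall>j\<in>set [1..<Suc d].
        linear_form (P j) (A j) = 0 \<and> linear_form (P j) (B j) = 0 \<and>
        linear_form (Q j) (A j) = 0 \<and> linear_form (Q j) (B j) = 0 \<and>
        (\<exists>(m, n)\<in>set [(0, 1), (0, 2), (0, 3), (1, 2), (1, 3), (2, 3)].
           det2 (A j m) (A j n) (B j m) (B j n) \<noteq> 0)) \<and>
     (\<forall>i\<in>set [1..<Suc d]. \<forall>j\<in>set [1..<Suc d]. i \<noteq> j \<longrightarrow>
        (linear_form (P j) (A i) \<noteq> 0 \<or> linear_form (Q j) (A i) \<noteq> 0 \<or>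
         linear_form (P j) (B i) \<noteq> 0 \<or> linear_form (Q j) (B i) \<noteq> 0) \<and>
        (j = Suc i \<longrightarrow> (\<forall>k\<in>set [0..<4]. A j k = A i k + B i k)) \<and>
        (j \<noteq> Suc i \<longrightarrow> i \<noteq> Suc j \<longrightarrow>
           det2 (linear_form (P i) (A j)) (linear_form (P i) (B j))
             (linear_form (Q i) (A j)) (linear_form (Q i) (B j)) \<noteq> 0))"

lemma meets_if_base_on_line:
  assumes indep: "lin_indep2 (lnA x j) (lnB x j)"
    and base: "\<And>k. k < 4 \<Longrightarrow> lnA x j k = lnA x i k + lnB x i k"
  shows "meets x i j"
proof -
  have "on_L x j (lnA x j)"
    unfolding on_L_def using indep by (rule on_line_base)
  moreover from this have "on_L x i (lnA x j)"
    using base unfolding on_L_def on_line_def by (auto intro!: exI[of _ 1])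
  ultimately show ?thesis unfolding meets_def by blast
qed

lemma T3_chain_if_chain_certificate:
  fixes P Q :: "nat \<Rightarrow> vec4"
  assumes "chain_certificate d (lnA x) (lnB x) P Q"
  shows "x \<in> T3 d (\<lambda>i. i - 1)"
proof -
  let ?A = "lnA x" and ?B = "lnB x"
  have "set [1..<Suc d] = {1..d}" by auto
  note cert = assms[unfolded chain_certificate_def this]
  note line = cert[THEN conjunct1, rule_format] and pair = cert[THEN conjunct2, rule_format]
  have indep: "lin_indep2 (?A j) (?B j)" if "j \<in> {1..d}" for j
  proof -
    from line[OF that] obtain m n
      where mn: "(m, n) \<in> set [(0, 1), (0, 2), (0, 3), (1, 2), (1, 3), (2, 3)]"
      and "det2 (?A j m) (?A j n) (?B j m) (?B j n) \<noteq> 0"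
      by blast
    moreover from mn have "m < 4" "n < 4" by auto
    ultimately show ?thesis by (intro lin_indep2_if_det2)
  qed
  have off_line: "\<not> on_L x j q"
    if "j \<in> {1..d}" "linear_form (P j) q \<noteq> 0 \<or> linear_form (Q j) q \<noteq> 0" for j q
    using that line[OF that(1)] linear_form_vanishes_on_line unfolding on_L_def by blast
  have meets_iff: "meets x i j \<longleftrightarrow> j = Suc i \<or> i = Suc j"
    if ij: "i \<in> {1..d}" "j \<in> {1..d}" "i \<noteq> j" for i j
  proof (cases "j = Suc i \<or> i = Suc j")
    case True
    then show ?thesis
    proof
      assume "j = Suc i"
      then show ?thesis
        using meets_if_base_on_line[OF indep[OF ij(2)]] pair[OF ij] by simp
    next
      assume "i = Suc j"
      then have "meets x j i"
        using meets_if_base_on_line[OF indep[OF ij(1)]] pair[OF ij(2,1) ij(3)[symmetric]] by simp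
      with \<open>i = Suc j\<close> show ?thesis unfolding meets_def by blast
    qed
  next
    case False
    then have "\<not> meets x i j"
      using lines_disjoint_if_det2[of "P i" "?A i" "?B i" "Q i" "?A j" "?B j"] line[OF ij(1)]
        pair[OF ij] unfolding meets_def on_L_def by blast
    with False show ?thesis by blast
  qed
  show ?thesis
    unfolding T3_def
  proof (intro CollectI conjI ballI impI)
    fix i j assume i: "i \<in> {1..d}" and j: "j \<in> {1..d}" and "i \<noteq> j"
    have "on_L x i (?A i)" "on_L x i (?B i)"
      unfolding on_L_def using on_line_base indep[OF i] by blast+
    then show "\<exists>p. on_L x i p \<and> \<not> on_L x j p"
      using off_line[OF j] pair[OF i j \<open>i \<noteq> j\<close>] by blast
    show "meets x i j \<longleftrightarrow> 2 \<le> i \<and> j = i - 1 \<or> 2 \<le> j \<and> i = j - 1"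
      using meets_iff[OF i j \<open>i \<noteq> j\<close>] i j by auto
  qed (rule indep)
qed

lemma of_int_det2: "det2 (of_int a) (of_int b) (of_int c) (of_int d) = of_int (det2 a b c d)"
  by (simp add: det2_def)

lemma of_int_linear_form:
  "linear_form (\<lambda>k. of_int (f k)) (\<lambda>k. of_int (p k)) = of_int (linear_form f p)"
  by (simp add: linear_form_def)

lemma of_int_line_point:
  "line_point (\<lambda>k. of_int (a k)) (\<lambda>k. of_int (b k)) (of_int u) = (\<lambda>k. of_int (line_point a b u k))"
  by (simp add: line_point_def)

lemma of_int_column_value:
  "column_value (\<lambda>n. of_int (c n)) (\<lambda>j k. of_int (A j k)) (\<lambda>j k. of_int (B j k)) cl j (of_int u) =
    (of_int (column_value c A B cl j u) :: 'a::comm_ring_1)"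
  by (cases cl) (simp_all add: of_int_line_point of_int_cubic_form)

lemma of_int_restriction_matrix:
  "restriction_matrix cs (\<lambda>n. of_int (c n)) (\<lambda>j k. of_int (A j k)) (\<lambda>j k. of_int (B j k)) =
    map_mat of_int (restriction_matrix cs c A B)"
  by (rule eq_matI) (simp_all add: restriction_matrix_def of_int_column_value[symmetric])

lemma column_value_cong:
  assumes "column_ok cl" "\<And>k. k < 4 \<Longrightarrow> A j k = A' j k" "\<And>k. k < 4 \<Longrightarrow> B j k = B' j k"
  shows "column_value c A B cl j u = column_value c A' B' cl j u"
proof -
  have point: "line_point (A j) (B j) u k = line_point (A' j) (B' j) u k" if "k < 4" for k
    using assms(2,3)[OF that] by (simp add: line_point_def)
  then have "cubic_form c (line_point (A j) (B j) u) = cubic_form c (line_point (A' j) (B' j) u)"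
    by (rule cubic_form_cong)
  with assms(1) point show ?thesis by (cases cl) auto
qed

lemma restriction_matrix_cong:
  assumes "list_all column_ok cs"
    and "\<And>j k. k < 4 \<Longrightarrow> A j k = A' j k" "\<And>j k. k < 4 \<Longrightarrow> B j k = B' j k"
  shows "restriction_matrix cs c A B = restriction_matrix cs c A' B'"
  using assms unfolding restriction_matrix_def
  by (intro cong_mat refl) (auto simp: list_all_length intro!: column_value_cong)

lemma chain_certificate_cong:
  assumes A: "\<And>j k. k < 4 \<Longrightarrow> A j k = A' j k" and B: "\<And>j k. k < 4 \<Longrightarrow> B j k = B' j k"
  shows "chain_certificate d A B P Q = chain_certificate d A' B' P Q"
proof -
  have forms: "linear_form f (A j) = linear_form f (A' j)" "linear_form f (B j) = linear_form f (B' j)"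
    for f j
    unfolding linear_form_def using A B by (auto intro!: sum.cong)
  have minors: "(\<exists>(m, n)\<in>set [(0, 1), (0, 2), (0, 3), (1, 2), (1, 3), (2, 3)].
        det2 (A j m) (A j n) (B j m) (B j n) \<noteq> 0) \<longleftrightarrow>
      (\<exists>(m, n)\<in>set [(0, 1), (0, 2), (0, 3), (1, 2), (1, 3), (2, 3)].
        det2 (A' j m) (A' j n) (B' j m) (B' j n) \<noteq> 0)" for j
    using A B by simp
  have bases: "(\<forall>k\<in>set [0..<4]. A j k = A i k + B i k) \<longleftrightarrow>
      (\<forall>k\<in>set [0..<4]. A' j k = A' i k + B' i k)" for i j
    using A B by auto
  show ?thesis
    unfolding chain_certificate_def by (simp only: forms minors bases)
qed

lemma chain_certificate_of_int:
  "chain_certificate d (\<lambda>j k. of_int (A j k) :: 'a::{comm_ring_1, ring_char_0}) (\<lambda>j k. of_int (B j k))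
      (\<lambda>j k. of_int (P j k)) (\<lambda>j k. of_int (Q j k)) \<longleftrightarrow>
    chain_certificate d A B P Q"
  unfolding chain_certificate_def
  by (simp only: of_int_linear_form of_int_det2 of_int_add[symmetric] of_int_eq_iff
      of_int_eq_0_iff)

section \<open>The witness\<close>

definition tree_columns :: "column list" where
  "tree_columns =
   [Monomial 0 0 0 0, Monomial 1 1 1 1, Monomial 0 0 0 1, Monomial 0 0 1 1, Monomial 0 1 1 1,
    Monomial 1 1 1 2, Monomial 1 1 2 2, Monomial 1 2 2 2, Monomial 2 2 2 2, Multiple 1 0,
    Monomial 1 1 1 3, Monomial 1 1 2 3, Monomial 1 2 2 3, Monomial 2 2 2 3, Multiple 2 0,
    Monomial 0 0 0 2, Monomial 0 0 0 3, Monomial 0 0 1 2, Monomial 0 1 1 2, Multiple 3 0,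
    Monomial 0 0 1 3, Monomial 0 0 2 2, Monomial 0 2 2 2, Monomial 2 2 3 3, Multiple 4 0,
    Monomial 0 0 2 3, Monomial 0 0 3 3, Monomial 0 2 2 3, Monomial 2 3 3 3, Multiple 5 0,
    Monomial 0 1 1 3, Monomial 0 1 2 2, Monomial 0 1 2 3, Monomial 1 1 3 3, Multiple 6 0,
    Monomial 0 1 3 3, Monomial 0 2 3 3, Monomial 0 3 3 3, Monomial 1 2 3 3, Multiple 7 0,
    Monomial 1 3 3 3, Monomial 3 3 3 3, Multiple 1 1, Multiple 2 1, Multiple 8 0,
    Multiple 3 1, Multiple 4 1, Multiple 5 1, Multiple 6 1, Multiple 9 0]"

text \<open>Row \<open>j - 1\<close> of \<open>witness_lines\<close> lists the coordinates of \<open>A\<^sub>j\<close> and \<open>B\<^sub>j\<close>, and row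
  \<open>j - 1\<close> of \<open>witness_planes\<close> two linear forms \<open>P\<^sub>j\<close>, \<open>Q\<^sub>j\<close> cutting out \<open>L\<^sub>j\<close>.\<close>

definition witness_lines :: "int list list" where
  "witness_lines =
   [[3, 0, 3, 0, -3, -1, 1, 0],
    [0, -1, 4, 0, 0, 3, 3, -1],
    [0, 2, 7, -1, 0, -1, 1, -2],
    [0, 1, 8, -3, 1, -2, -1, -2],
    [1, -1, 7, -5, 3, -3, 1, 3],
    [4, -4, 8, -2, -1, 1, 2, 3],
    [3, -3, 10, 1, 1, -2, -1, -3],
    [4, -5, 9, -2, 2, -3, 3, 2],
    [6, -8, 12, 0, -1, 0, 1, -3],
    [5, -8, 13, -3, -1, 0, -1, 1]]"

definition witness_planes :: "int list list" where
  "witness_planes =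
   [[3, -12, -3, 0, 0, 0, 0, -3],
    [-15, 0, 0, 0, 0, -4, -1, -15],
    [9, 0, 0, 0, 0, -13, 5, 9],
    [15, 8, -1, 0, -8, -3, 0, -1],
    [20, 20, 0, 0, 26, 0, -18, -20],
    [-16, -16, 0, 0, 28, 0, -10, 16],
    [23, 13, -3, 0, 11, 10, 0, -3],
    [12, 6, -2, 0, -16, -12, 0, -2],
    [-8, -18, -8, 0, 24, 18, 0, -8],
    [8, -8, -8, 0, -8, -2, 0, -8]]"

definition witness_cubic :: "int list" where
  "witness_cubic =
   [2, -2, 1, 0, 0, 0, 3, 1, 0, 0, -1, -3, 0, 0, 0, 3,
    0, 0, 0, 0, 0, 1, -3, -3, 0, 0, 2, 3, 0, 0, 0, 0,
    0, 0, 0, 0, 0, 0, 0, 0, 0, 0, 2, 3, 0, 0, 0, 3,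
    0, 0, 0, 0, 0, 0, 0, 0, 0, 0, 0, 0, 0, 0, 0, 2]"

definition lu_lower :: "int list list" where
  "lu_lower =
   [[1],
    [0,1],
    [1,0,1],
    [16,994,12,1],
    [81,929,54,6,1],
    [0,81,0,0,0,1],
    [0,16,0,0,0,374,1],
    [0,1,0,0,0,299,505,1],
    [0,0,0,0,0,0,0,0,1],
    [0,1,0,0,0,710,1,1003,4,1],
    [0,1,0,0,0,867,787,670,494,896,1],
    [0,1,0,0,0,441,81,299,720,784,1008,1],
    [0,81,0,0,0,809,938,577,663,985,982,18,1],
    [0,625,0,0,0,723,564,95,726,793,884,75,5,1],
    [0,383,0,0,0,848,225,471,303,511,666,196,14,4,1],
    [436,589,517,410,772,922,67,839,20,523,132,148,125,604,136,1],
    [436,574,872,382,54,431,666,842,569,926,522,844,757,509,743,807,1],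
    [436,573,218,709,859,0,0,0,370,0,0,0,0,764,832,604,2,1],
    [436,574,573,382,328,451,937,752,854,236,485,446,526,647,671,401,3,3,1],
    [436,589,928,410,647,73,217,605,552,743,845,1000,971,445,528,198,4,6,4,1],
    [1,80,2,672,338,270,663,40,533,699,525,951,845,112,207,845,980,323,491,115,1],
    [626,639,243,928,707,981,353,81,658,607,907,562,159,36,742,884,70,803,977,570,974,1],
    [70,555,140,626,453,28,820,267,110,353,191,366,57,487,428,125,41,449,442,593,42,886,1],
    [16,271,32,662,363,946,936,416,155,279,405,401,886,993,152,980,416,566,901,742,8,259,609,1],
    [503,889,1006,1,502,461,422,374,580,753,970,781,981,181,471,4,742,441,333,566,648,769,412,4,1],
    [436,574,872,382,54,5,0,818,803,378,980,628,427,667,280,707,374,431,449,454,901,273,189,708,392,1],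
    [1,80,2,672,338,673,603,32,558,791,267,671,638,555,453,518,999,794,476,526,899,558,288,976,687,426,1],
    [503,889,1006,1,502,129,530,566,328,380,88,465,867,164,216,684,296,363,27,854,1007,651,96,1006,685,890,123,1],
    [542,982,75,984,567,616,609,925,958,29,294,59,257,204,930,732,132,693,235,940,730,503,683,746,704,796,713,293,1],
    [625,559,241,256,369,678,50,549,923,55,306,882,758,231,575,216,18,413,456,849,751,89,92,144,53,556,100,157,4,1],
    [436,589,517,410,772,922,67,839,20,523,686,392,271,823,201,1,486,464,268,91,174,874,274,406,565,194,3,962,165,327,1],
    [626,1008,730,254,688,42,482,914,428,323,996,275,648,752,324,96,175,544,856,591,49,517,725,938,675,874,973,91,217,290,103,1],
    [503,566,321,807,15,972,124,292,208,8,329,531,534,356,399,686,370,565,857,34,316,92,30,910,620,570,260,377,349,662,156,341,1],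
    [111,404,390,355,15,705,673,87,295,724,672,771,285,609,367,482,681,267,516,673,743,489,92,71,483,438,137,247,668,731,843,517,725,1],
    [527,556,67,195,981,278,119,163,890,403,330,566,434,670,951,537,478,284,403,232,476,855,645,405,691,759,883,146,272,794,829,26,876,4,1],
    [922,168,13,581,703,68,966,23,520,7,810,337,814,717,273,816,218,989,933,185,792,110,541,820,717,192,816,892,545,237,385,101,454,771,451,1],
    [16,44,40,989,70,860,515,968,78,961,648,90,440,696,860,158,801,534,146,649,13,742,99,535,986,485,25,244,880,807,462,80,604,414,231,793,1],
    [111,198,726,759,850,53,208,677,651,971,538,689,96,307,806,64,683,513,845,892,336,43,25,802,614,299,590,486,433,444,98,918,246,554,890,923,499,1],
    [985,64,230,419,251,201,932,651,787,153,779,631,119,773,134,635,41,216,800,959,23,156,262,637,452,204,196,618,980,762,623,593,185,798,530,956,878,206,1],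
    [287,61,105,539,894,830,7,111,225,321,349,977,254,176,589,240,225,890,163,953,530,497,1000,379,398,557,709,815,424,245,794,134,217,753,280,448,522,818,4,1],
    [436,573,218,709,859,0,0,0,0,0,0,0,0,828,776,202,971,3,223,694,856,996,693,502,1008,253,636,314,730,540,401,746,308,833,998,253,406,169,800,422,1],
    [70,999,203,645,758,561,553,258,442,439,245,355,519,562,755,300,631,486,830,468,78,799,541,778,227,267,773,132,115,477,550,641,684,489,1005,179,454,379,349,271,468,1],
    [542,418,628,76,165,269,472,254,309,900,81,5,825,208,754,601,330,478,772,708,236,806,611,205,275,338,300,825,769,356,726,50,586,658,61,467,282,680,416,790,29,342,1],
    [346,478,787,1,204,38,363,31,31,965,238,970,260,266,955,813,74,764,959,24,222,185,407,919,110,733,309,885,381,91,811,607,607,345,814,365,909,560,189,643,687,777,270,1],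
    [378,856,934,939,652,233,75,666,901,73,854,367,654,787,991,400,931,819,760,494,249,777,800,743,156,242,474,624,607,802,676,821,701,419,357,1000,351,516,874,512,409,51,65,4,1],
    [436,573,218,709,859,0,0,0,0,0,0,0,0,276,595,0,486,464,268,428,160,189,20,857,332,0,256,916,186,910,405,0,422,685,188,213,397,153,191,856,512,204,600,346,987,1],
    [626,443,173,24,877,561,200,245,196,232,104,108,254,16,337,759,490,800,810,91,300,665,35,75,299,145,349,170,96,718,628,963,513,962,15,775,246,770,939,944,786,431,129,642,645,328,1],
    [81,879,761,67,517,904,979,664,487,604,774,501,606,380,568,674,388,989,316,4,7,229,836,366,533,812,737,668,926,987,270,633,779,433,192,316,66,593,625,588,573,461,563,981,38,125,638,1],
    [985,848,647,298,202,36,956,382,489,1007,903,105,1,389,223,384,597,373,471,678,729,861,201,28,65,463,668,76,652,336,254,887,166,460,926,459,1005,791,485,188,230,704,648,937,28,272,298,162,1],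
    [139,86,341,522,385,338,923,680,336,769,219,312,759,444,213,665,534,877,682,739,741,510,820,896,347,941,789,237,10,760,577,824,919,15,310,60,981,530,41,594,247,585,139,84,468,640,395,642,4,1]]"

definition lu_upper :: "int list list" where
  "lu_upper =
   [[81],
    [1,1],
    [27,0,955],
    [9,0,0,901],
    [3,0,1003,18,973],
    [1008,1005,1003,18,973,405],
    [1,16,48,757,288,803,300],
    [1008,945,667,142,290,220,150,116],
    [1,256,382,159,135,534,389,325,175],
    [990,83,510,309,755,340,664,843,0,26],
    [0,0,0,0,0,982,0,0,0,0,204],
    [0,0,0,0,0,982,989,0,0,0,805,182],
    [0,0,0,0,0,982,919,934,0,0,204,265,262],
    [0,0,0,0,0,982,674,351,661,0,805,284,117,223],
    [0,0,0,0,0,34,40,396,64,0,301,212,322,888,592],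
    [982,0,216,0,0,0,0,0,0,0,0,0,0,0,0,999],
    [0,0,0,0,0,0,0,0,0,0,0,0,0,0,0,1007,600],
    [1000,0,955,432,0,0,0,0,0,0,0,0,0,0,0,20,2,24],
    [1006,0,24,829,144,0,0,0,0,0,0,0,0,0,0,969,1003,965,72],
    [0,0,0,0,0,0,0,0,0,0,1007,650,491,327,0,349,875,757,454,496],
    [0,0,0,0,0,0,0,0,0,0,0,0,0,0,0,4,813,1003,0,0,865],
    [9,0,432,290,0,0,0,0,0,0,0,0,0,0,0,929,8,96,0,0,502,221],
    [1006,0,23,727,286,0,0,0,0,0,0,0,0,0,0,279,72,190,429,0,810,381,60],
    [0,0,0,0,0,9,719,602,225,0,569,539,460,220,0,831,589,574,280,0,706,521,293,714],
    [0,0,0,0,0,0,0,0,0,0,0,0,0,0,0,1005,553,824,885,0,814,679,562,445,633],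
    [0,0,0,0,0,0,0,0,0,0,0,0,0,0,0,2,369,961,0,0,326,911,0,0,0,749],
    [0,0,0,0,0,0,0,0,0,0,0,0,0,0,0,4,833,18,0,0,918,290,0,0,0,555,432],
    [0,0,0,0,0,0,0,0,0,0,0,0,0,0,0,1007,360,706,866,0,619,348,955,0,0,229,554,650],
    [0,0,0,0,0,1006,106,833,994,0,105,555,327,677,0,444,254,996,895,0,458,488,448,393,0,702,768,341,703],
    [0,0,0,0,0,0,0,0,0,0,0,0,0,0,0,0,0,0,0,0,38,385,581,823,0,589,640,295,241,482],
    [0,0,0,0,0,0,0,0,0,0,0,0,0,0,0,1001,397,2,991,0,312,0,0,0,0,0,0,0,0,0,840],
    [3,0,859,143,433,0,0,0,0,0,0,0,0,0,0,160,8,208,288,0,507,788,0,0,0,0,0,0,0,0,0,349],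
    [0,0,0,0,0,0,0,0,0,0,0,0,0,0,0,1005,236,935,865,0,876,98,0,0,0,260,0,0,0,0,666,921,593],
    [0,0,0,0,0,9,674,0,0,0,569,537,0,0,0,839,719,342,737,0,522,297,0,0,0,169,432,0,0,0,347,645,895,576],
    [0,0,0,0,0,0,0,0,0,0,0,0,0,0,0,0,0,0,0,0,0,0,0,0,0,156,994,752,712,0,653,737,461,418,645],
    [0,0,0,0,0,0,0,0,0,0,0,0,0,0,0,1001,377,42,54,0,739,719,0,0,0,454,577,0,0,0,504,429,701,0,0,758],
    [0,0,0,0,0,0,0,0,0,0,0,0,0,0,0,1005,376,606,432,0,980,972,654,0,0,731,141,578,0,0,886,809,86,0,0,869,413],
    [0,0,0,0,0,0,0,0,0,0,0,0,0,0,0,1001,277,739,847,0,6,713,824,0,0,715,28,131,0,0,905,465,105,0,0,221,595,745],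
    [0,0,0,0,0,9,684,5,0,0,440,184,263,0,0,75,491,132,228,0,405,434,207,0,0,509,30,475,0,0,303,524,325,478,0,814,706,355,160],
    [0,0,0,0,0,0,0,0,0,0,0,0,0,0,0,0,0,0,0,0,0,0,0,0,0,0,0,0,0,0,969,839,194,606,0,939,32,740,163,42],
    [0,0,0,0,0,1006,111,336,0,0,904,708,447,0,0,512,999,535,986,0,314,256,593,0,0,735,301,408,0,0,565,577,737,709,0,407,555,398,572,0,251],
    [0,0,0,0,0,1,636,393,1,0,644,53,98,34,0,552,209,101,535,0,977,631,375,628,0,734,890,617,325,0,118,567,465,712,0,804,425,857,77,0,43,634],
    [0,83,982,65,742,340,664,843,0,26,0,0,0,0,0,37,360,474,166,0,758,0,0,0,0,381,955,0,0,0,732,187,50,0,0,987,397,372,0,0,868,667,828],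
    [0,0,0,0,0,0,648,660,192,983,407,1008,307,915,592,188,183,723,874,0,759,330,444,482,0,390,449,914,547,0,407,410,376,531,0,361,469,591,880,0,409,263,105,603],
    [0,0,0,0,0,0,0,0,0,0,0,0,0,0,0,0,0,0,0,0,0,0,0,0,0,0,0,0,0,0,0,0,0,0,0,855,244,490,105,0,113,755,413,418,990],
    [0,0,0,0,0,0,0,0,0,0,0,652,646,298,417,749,517,125,61,496,222,646,149,58,0,308,988,442,698,0,517,778,427,183,0,996,88,15,577,0,280,155,72,590,0,186],
    [0,0,0,0,0,0,0,0,0,0,0,0,0,0,0,0,352,342,82,513,267,468,29,811,633,664,459,163,160,0,449,797,550,596,0,736,201,205,772,0,228,773,406,992,0,58,302],
    [0,0,0,0,0,0,0,0,0,0,0,0,0,0,0,0,0,0,0,0,0,64,254,113,376,745,258,28,98,482,642,330,942,197,0,115,202,571,122,0,731,249,666,23,0,593,349,437],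
    [0,0,0,0,0,0,0,0,0,0,0,0,0,0,0,0,0,0,0,0,0,0,0,0,0,0,856,694,225,527,198,890,140,80,645,838,109,304,178,0,156,374,759,452,0,815,152,819,10],
    [0,0,0,0,0,0,0,0,0,0,0,0,0,0,0,0,0,0,0,0,0,0,0,0,0,0,0,0,0,0,0,0,0,0,0,0,0,0,0,0,939,870,936,648,0,832,474,189,443,538]]"

definition witness_A :: "nat \<Rightarrow> nat \<Rightarrow> int" where
  "witness_A j k = witness_lines ! (j - 1) ! k"

definition witness_B :: "nat \<Rightarrow> nat \<Rightarrow> int" where
  "witness_B j k = witness_lines ! (j - 1) ! (4 + k)"

definition witness_P :: "nat \<Rightarrow> nat \<Rightarrow> int" where
  "witness_P j k = witness_planes ! (j - 1) ! k"

definition witness_Q :: "nat \<Rightarrow> nat \<Rightarrow> int" where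
  "witness_Q j k = witness_planes ! (j - 1) ! (4 + k)"

text \<open>The certificates are evaluated on \<open>witness_A\<close> and \<open>witness_B\<close>, which avoid \<open>div\<close> and
  \<open>mod\<close> (slow under \<open>code_simp\<close>); they agree with \<^const>\<open>lnA\<close> and \<^const>\<open>lnB\<close> of \<open>x0\<close> on the
  coordinates \<open>k < 4\<close>, which are the only ones that matter.\<close>

definition x0 :: "nat \<Rightarrow> complex" where
  "x0 n = of_int (witness_lines ! (n div 8 - 1) ! (n mod 8))"

definition c0 :: "nat \<Rightarrow> complex" where
  "c0 = (\<lambda>n. of_int (nth_default 0 witness_cubic n))"

lemma lnA_x0: "k < 4 \<Longrightarrow> lnA x0 j k = of_int (witness_A j k)"
  by (simp add: lnA_def x0_def witness_A_def)

lemma lnB_x0: "k < 4 \<Longrightarrow> lnB x0 j k = of_int (witness_B j k)"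
proof -
  assume "k < 4"
  then have "(8 * j + 4 + k) div 8 = j" "(8 * j + 4 + k) mod 8 = 4 + k" by (simp_all add: add.assoc)
  then show ?thesis by (simp add: lnB_def x0_def witness_B_def)
qed

lemma tree_columns_ok: "list_all column_ok tree_columns"
  by (simp add: tree_columns_def)

lemma length_tree_columns: "length tree_columns = 5 * 10"
  by (simp add: tree_columns_def)

lemma lu_certificate_witness:
  "lu_certificate 1009 50 (\<lambda>r q. column_value (nth_default 0 witness_cubic) witness_A witness_B
     (tree_columns ! q) (r div 5 + 1) (of_nat (r mod 5))) lu_lower lu_upper"
  by code_simp

lemma chain_certificate_witness: "chain_certificate 10 witness_A witness_B witness_P witness_Q"
  by code_simp

lemma witness_cubic_nonzero_on_lines:
  "list_all (\<lambda>j. cubic_form (nth_default 0 witness_cubic) (witness_A j) \<noteq> 0) [1..<11]"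
  by code_simp

lemma xt_4: "xt 4 = 10"
  by code_simp

lemma det_restriction_matrix_witness: "det (restriction_matrix tree_columns c0 (lnA x0) (lnB x0)) \<noteq> 0"
proof -
  have "restriction_matrix tree_columns c0 (lnA x0) (lnB x0) =
      restriction_matrix tree_columns c0 (\<lambda>j k. of_int (witness_A j k)) (\<lambda>j k. of_int (witness_B j k))"
    by (rule restriction_matrix_cong[OF tree_columns_ok]) (simp_all add: lnA_x0 lnB_x0)
  also have "\<dots> = map_mat of_int
      (restriction_matrix tree_columns (nth_default 0 witness_cubic) witness_A witness_B)"
    unfolding c0_def by (rule of_int_restriction_matrix)
  finally show ?thesis
    using det_nonzero_if_lu_certificate[OF lu_certificate_witness]
    by (simp add: restriction_matrix_def length_tree_columns of_int_hom.hom_det)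
qed

lemma nondegeneracy_witness: "nondegeneracy tree_columns 10 c0 x0 \<noteq> 0"
proof -
  have "cubic c0 (lnA x0 j) = of_int (cubic_form (nth_default 0 witness_cubic) (witness_A j))" for j
  proof -
    have "cubic c0 (lnA x0 j) = cubic_form c0 (\<lambda>k. of_int (witness_A j k))"
      unfolding cubic_eq_cubic_form by (rule cubic_form_cong) (simp add: lnA_x0)
    then show ?thesis by (simp add: c0_def of_int_cubic_form)
  qed
  moreover have "cubic_form (nth_default 0 witness_cubic) (witness_A j) \<noteq> 0" if "j \<in> {1..10}" for j
    using witness_cubic_nonzero_on_lines that by (auto simp: list_all_iff)
  ultimately show ?thesis
    using det_restriction_matrix_witness by (simp add: nondegeneracy_def)
qed

lemma x0_in_T3: "x0 \<in> T3 10 (\<lambda>i. i - 1)"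
proof -
  have "chain_certificate 10 (lnA x0) (lnB x0) (\<lambda>j k. of_int (witness_P j k)) (\<lambda>j k. of_int (witness_Q j k)) =
      chain_certificate 10 (\<lambda>j k. of_int (witness_A j k) :: complex) (\<lambda>j k. of_int (witness_B j k))
        (\<lambda>j k. of_int (witness_P j k)) (\<lambda>j k. of_int (witness_Q j k))"
    by (rule chain_certificate_cong) (simp_all add: lnA_x0 lnB_x0)
  also have "\<dots> = chain_certificate 10 witness_A witness_B witness_P witness_Q"
    by (rule chain_certificate_of_int)
  finally show ?thesis
    using chain_certificate_witness T3_chain_if_chain_certificate by blast
qed

theorem lemma15:
  shows "general_on UNIV (\<lambda>c. \<exists>\<tau>. is_type (xt 4) \<tau> \<and>
           general_on (T3 (xt 4) \<tau>) (\<lambda>x. transversal (xt 4) c x \<longrightarrow> h1_vanish4 (xt 4) c x))"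
  unfolding general_on_def xt_4
proof (intro bexI[of _ "\<lambda>c. nondegeneracy tree_columns 10 c x0"] conjI ballI impI)
  show "(\<lambda>c. nondegeneracy tree_columns 10 c x0) \<in> polyfun"
    using polyfun_nondegeneracy[of "\<lambda>c. c" "\<lambda>c. x0"] by (simp add: polyfun.var polyfun.const)
  show "\<exists>c\<in>UNIV. nondegeneracy tree_columns 10 c x0 \<noteq> 0"
    using nondegeneracy_witness by blast
  fix c assume c: "nondegeneracy tree_columns 10 c x0 \<noteq> 0"
  show "\<exists>\<tau>. is_type 10 \<tau> \<and> (\<exists>f\<in>polyfun. (\<exists>x\<in>T3 10 \<tau>. f x \<noteq> 0) \<and>
      (\<forall>x\<in>T3 10 \<tau>. f x \<noteq> 0 \<longrightarrow> transversal 10 c x \<longrightarrow> h1_vanish4 10 c x))"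
  proof (intro exI[of _ "\<lambda>i. i - 1"] conjI bexI[of _ "nondegeneracy tree_columns 10 c"] ballI impI)
    show "is_type 10 (\<lambda>i. i - 1)" by (auto simp: is_type_def)
    show "nondegeneracy tree_columns 10 c \<in> polyfun"
      using polyfun_nondegeneracy[of "\<lambda>x. c" "\<lambda>x. x"] by (simp add: polyfun.var polyfun.const)
    show "\<exists>x\<in>T3 10 (\<lambda>i. i - 1). nondegeneracy tree_columns 10 c x \<noteq> 0"
      using x0_in_T3 c by blast
    fix x assume "nondegeneracy tree_columns 10 c x \<noteq> 0"
    then show "h1_vanish4 10 c x"
      by (rule h1_vanish4_if_nondegenerate[OF tree_columns_ok length_tree_columns])
  qed
qed

end
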